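(* Let $\rho$ be a representation of $32_{65}$ over a set $U$, and view it as an edge-coloring of the complete graph on $U$ in which the edge $\{x,y\}$ ($x\ne y$) gets the color $z\in\{a,b,c\}$ with $(x,y)\in\rho(z)$. Then for every edge $x_0x_1$ of color $a$ there is a set of four vertices, disjoint from $\{x_0,x_1\}$, all six of whose edges have color $a$. More precisely, there exist ten distinct vertices $x_0,x_1$, $w_{pq}$ for $(p,q)\in\{b,c\}^2$, $u_p$ and $v_p$ for $p\in\{b,c\}$ such that: $x_0w_{pq}$ has color $p$ and $w_{pq}x_1$ has color $q$; $x_0u_p$ has color $a$ and $u_px_1$ has color $p$; $x_0v_p$ has color $p$ and $v_px_1$ has color $a$; all edges among the four vertices $w_{pq}$ have color $a$; and every edge between a vertex $w_{pq}$ and a vertex $u_{p'}$ or $v_{p'}$ has color $a$.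
   Context: $32_{65}$ is the finite integral symmetric relation algebra with atoms $1'$, $a$, $b$, $c$, all symmetric, in which a diversity cycle $xyz$ (with $x,y,z\in\{a,b,c\}$) is mandatory (i.e. $x;y\ge z$) if it involves $a$ and forbidden (i.e. $x;y\cdot z=0$) otherwise. A representation over a set $U$ is an embedding $\rho$ into the full relation algebra $\langle\mathcal P(U\times U),\cup,{}^c,\circ,{}^{-1},\mathrm{Id}_U\rangle$. *)

theory Defs
  imports Main
begin

datatype atom = Id1 | At_a | At_b | At_c

text \<open>Atom composition table: 1' is the identity; for diversity atoms x, y the
  product x;y contains 1' iff x = y (all atoms symmetric) and contains a diversity
  atom z iff the cycle xyz is mandatory, i.e. iff a occurs among x, y, z.\<close>
definition atom_comp :: "atom \<Rightarrow> atom \<Rightarrow> atom set" where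
  "atom_comp x y =
     (if x = Id1 then {y}
      else if y = Id1 then {x}
      else {z. z \<noteq> Id1 \<and> At_a \<in> {x, y, z}} \<union> (if x = y then {Id1} else {}))"

definition ra_join :: "atom set \<Rightarrow> atom set \<Rightarrow> atom set" where
  "ra_join X Y = X \<union> Y"

definition ra_compl :: "atom set \<Rightarrow> atom set" where
  "ra_compl X = UNIV - X"

definition ra_comp :: "atom set \<Rightarrow> atom set \<Rightarrow> atom set" where
  "ra_comp X Y = (\<Union>x\<in>X. \<Union>y\<in>Y. atom_comp x y)"

definition ra_conv :: "atom set \<Rightarrow> atom set" where
  "ra_conv X = X"   \<comment> \<open>all atoms are symmetric\<close>

definition ra_one :: "atom set" where
  "ra_one = {Id1}"

definition representation :: "'u set \<Rightarrow> (atom set \<Rightarrow> ('u \<times> 'u) set) \<Rightarrow> bool" where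
  "representation U \<rho> \<longleftrightarrow>
     inj \<rho> \<and>
     (\<forall>X. \<rho> X \<subseteq> U \<times> U) \<and>
     (\<forall>X Y. \<rho> (ra_join X Y) = \<rho> X \<union> \<rho> Y) \<and>
     (\<forall>X. \<rho> (ra_compl X) = (U \<times> U) - \<rho> X) \<and>
     (\<forall>X Y. \<rho> (ra_comp X Y) = \<rho> X O \<rho> Y) \<and>
     (\<forall>X. \<rho> (ra_conv X) = (\<rho> X)\<inverse>) \<and>
     \<rho> ra_one = Id_on U"

definition has_color :: "(atom set \<Rightarrow> ('u \<times> 'u) set) \<Rightarrow> 'u \<Rightarrow> 'u \<Rightarrow> atom \<Rightarrow> bool" where
  "has_color \<rho> x y z \<longleftrightarrow> (x, y) \<in> \<rho> {z}"

end

theory Submission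
  imports Defs
begin

text \<open>For diversity atoms p, q the product p;q contains a, since every cycle through a
  is mandatory. Hence for every such pair (p, q) there is a vertex w p q with x0 w p q of
  color p and w p q x1 of color q; we take u p = w a p and v p = w p a. A vertex determines
  its pair of colors towards x0 and x1, and the ten pairs involved are distinct, so the ten
  vertices are. Finally, for p, q in {b, c} the product p;q lies below 1' + a (cycles
  avoiding a are forbidden), so two distinct vertices joined to a common vertex by edges
  colored b or c are joined by an a-edge.\<close>

lemma At_a_in_atom_comp: "x \<noteq> Id1 \<Longrightarrow> y \<noteq> Id1 \<Longrightarrow> At_a \<in> atom_comp x y"
  unfolding atom_comp_def by auto

lemma atom_comp_subset_Id1_At_a:
  "x \<in> {At_b, At_c} \<Longrightarrow> y \<in> {At_b, At_c} \<Longrightarrow> atom_comp x y \<subseteq> {Id1, At_a}"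
  unfolding atom_comp_def by auto

locale ra_representation =
  fixes U :: "'u set" and \<rho> :: "atom set \<Rightarrow> ('u \<times> 'u) set"
  assumes representation: "representation U \<rho>"
begin

lemma rho_subset: "\<rho> X \<subseteq> U \<times> U"
  using representation unfolding representation_def by simp

lemma rho_union: "\<rho> (X \<union> Y) = \<rho> X \<union> \<rho> Y"
  using representation unfolding representation_def ra_join_def by simp

lemma rho_complement: "\<rho> (- X) = U \<times> U - \<rho> X"
  using representation unfolding representation_def ra_compl_def by (simp add: Compl_eq_Diff_UNIV)

lemma rho_atom_comp: "\<rho> (atom_comp p q) = \<rho> {p} O \<rho> {q}"
proof -
  have "ra_comp {p} {q} = atom_comp p q"
    by (simp add: ra_comp_def)
  with representation show ?thesis
    unfolding representation_def by metis
qed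

lemma rho_converse: "(\<rho> X)\<inverse> = \<rho> X"
  using representation unfolding representation_def ra_conv_def by simp

lemma rho_Id1: "\<rho> {Id1} = Id_on U"
  using representation unfolding representation_def ra_one_def by simp

lemma rho_mono: "X \<subseteq> Y \<Longrightarrow> \<rho> X \<subseteq> \<rho> Y"
  by (metis rho_union sup.order_iff)

lemma has_color_sym: "has_color \<rho> x y z \<Longrightarrow> has_color \<rho> y x z"
  unfolding has_color_def by (metis converse_iff rho_converse)

lemma has_color_Id1_iff: "has_color \<rho> x y Id1 \<longleftrightarrow> x \<in> U \<and> y = x"
  unfolding has_color_def rho_Id1 by blast

lemma has_color_in_carrier: "has_color \<rho> x y z \<Longrightarrow> x \<in> U"
  unfolding has_color_def using rho_subset by blast

lemma has_color_unique: "has_color \<rho> x y z \<Longrightarrow> has_color \<rho> x y z' \<Longrightarrow> z = z'"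
proof (rule ccontr)
  assume xy: "has_color \<rho> x y z" "has_color \<rho> x y z'" and "z \<noteq> z'"
  then have "\<rho> {z} \<subseteq> \<rho> (- {z'})"
    by (intro rho_mono) blast
  with xy show False
    unfolding has_color_def rho_complement by blast
qed

lemma has_color_mandatory:
  assumes "has_color \<rho> x y z" and "z \<in> atom_comp p q"
  shows "\<exists>w. has_color \<rho> x w p \<and> has_color \<rho> w y q"
proof -
  have "\<rho> {z} \<subseteq> \<rho> {p} O \<rho> {q}"
    using rho_mono[of "{z}" "atom_comp p q"] assms(2) by (simp add: rho_atom_comp)
  with assms(1) show ?thesis
    unfolding has_color_def by blast
qed

lemma has_color_At_a_witness:
  "has_color \<rho> x y At_a \<Longrightarrow> p \<noteq> Id1 \<Longrightarrow> q \<noteq> Id1 \<Longrightarrow>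
    \<exists>w. has_color \<rho> x w p \<and> has_color \<rho> w y q"
  by (simp add: has_color_mandatory At_a_in_atom_comp)

lemma has_color_At_a_if_common_bc_neighbor:
  assumes "has_color \<rho> x y p" and "has_color \<rho> x y' q"
    and "p \<in> {At_b, At_c}" and "q \<in> {At_b, At_c}" and "y \<noteq> y'"
  shows "has_color \<rho> y y' At_a"
proof -
  have "(y, y') \<in> \<rho> {p} O \<rho> {q}"
    using has_color_sym[OF assms(1)] assms(2) unfolding has_color_def by blast
  also have "\<dots> \<subseteq> \<rho> {Id1, At_a}"
    unfolding rho_atom_comp[symmetric]
    using assms(3,4) by (intro rho_mono atom_comp_subset_Id1_At_a)
  also have "\<dots> = Id_on U \<union> \<rho> {At_a}"
    using rho_union[of "{Id1}" "{At_a}"] by (simp add: rho_Id1 insert_commute[of Id1])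
  finally have "(y, y') \<in> Id_on U \<union> \<rho> {At_a}" .
  with assms(5) show ?thesis
    unfolding has_color_def by auto
qed

lemma the_has_color_eq: "has_color \<rho> x y z \<Longrightarrow> (THE z. has_color \<rho> x y z) = z"
  by (rule the_equality) (auto intro: has_color_unique)

lemma distinct_if_color_profiles_distinct:
  assumes "list_all2 (\<lambda>y (p, q). has_color \<rho> x y p \<and> has_color \<rho> y z q) ys pqs"
    and "distinct pqs"
  shows "distinct ys"
proof -
  define profile where "profile y = (THE p. has_color \<rho> x y p, THE q. has_color \<rho> y z q)" for y
  have profile: "profile y = (p, q)" if "has_color \<rho> x y p" "has_color \<rho> y z q" for y p q
    unfolding profile_def using the_has_color_eq[OF that(1)] the_has_color_eq[OF that(2)] by simp
  have "pqs = map profile ys"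
    using assms(1)
  proof (induction rule: list_all2_induct)
    case (Cons y ys pq pqs)
    then show ?case
      using profile[of y "fst pq" "snd pq"] by (simp add: case_prod_beta)
  qed simp
  with assms(2) show ?thesis
    by (simp add: distinct_map)
qed

lemma has_color_At_a_if_profiles_differ:
  assumes "has_color \<rho> x y p" "has_color \<rho> y z q" "has_color \<rho> x y' p'" "has_color \<rho> y' z q'"
    and "(p, q) \<noteq> (p', q')"
    and "p \<in> {At_b, At_c} \<and> p' \<in> {At_b, At_c} \<or> q \<in> {At_b, At_c} \<and> q' \<in> {At_b, At_c}"
  shows "has_color \<rho> y y' At_a"
proof -
  have "y \<noteq> y'"
    using assms(1-5) has_color_unique by blast
  from assms(6) show ?thesis
  proof
    assume "p \<in> {At_b, At_c} \<and> p' \<in> {At_b, At_c}"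
    with assms(1,3) \<open>y \<noteq> y'\<close> show ?thesis
      by (intro has_color_At_a_if_common_bc_neighbor[of x _ p _ p']) simp_all
  next
    assume "q \<in> {At_b, At_c} \<and> q' \<in> {At_b, At_c}"
    with has_color_sym[OF assms(2)] has_color_sym[OF assms(4)] \<open>y \<noteq> y'\<close> show ?thesis
      by (intro has_color_At_a_if_common_bc_neighbor[of z _ q _ q']) simp_all
  qed
qed

end

theorem mainTheorem6:
  fixes U :: "'u set" and \<rho> :: "atom set \<Rightarrow> ('u \<times> 'u) set" and x0 x1 :: 'u
  assumes rep: "representation U \<rho>"
    and edge: "has_color \<rho> x0 x1 At_a"
  shows "\<exists>(w :: atom \<Rightarrow> atom \<Rightarrow> 'u) (u :: atom \<Rightarrow> 'u) (v :: atom \<Rightarrow> 'u).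
     distinct [x0, x1, w At_b At_b, w At_b At_c, w At_c At_b, w At_c At_c,
               u At_b, u At_c, v At_b, v At_c] \<and>
     (\<forall>p\<in>{At_b, At_c}. \<forall>q\<in>{At_b, At_c}.
        has_color \<rho> x0 (w p q) p \<and> has_color \<rho> (w p q) x1 q) \<and>
     (\<forall>p\<in>{At_b, At_c}.
        has_color \<rho> x0 (u p) At_a \<and> has_color \<rho> (u p) x1 p \<and>
        has_color \<rho> x0 (v p) p \<and> has_color \<rho> (v p) x1 At_a) \<and>
     (\<forall>p\<in>{At_b, At_c}. \<forall>q\<in>{At_b, At_c}. \<forall>p'\<in>{At_b, At_c}. \<forall>q'\<in>{At_b, At_c}.
        (p, q) \<noteq> (p', q') \<longrightarrow> has_color \<rho> (w p q) (w p' q') At_a) \<and>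
     (\<forall>p\<in>{At_b, At_c}. \<forall>q\<in>{At_b, At_c}. \<forall>p'\<in>{At_b, At_c}.
        has_color \<rho> (w p q) (u p') At_a \<and> has_color \<rho> (w p q) (v p') At_a)"
proof -
  interpret ra_representation U \<rho>
    using rep by unfold_locales
  define w where "w p q = (SOME y. has_color \<rho> x0 y p \<and> has_color \<rho> y x1 q)" for p q
  have w: "has_color \<rho> x0 (w p q) p \<and> has_color \<rho> (w p q) x1 q" if "p \<noteq> Id1" "q \<noteq> Id1" for p q
    unfolding w_def using has_color_At_a_witness[OF edge that] by (rule someI_ex)
  have ends: "has_color \<rho> x0 x0 Id1" "has_color \<rho> x1 x1 Id1" "has_color \<rho> x1 x0 At_a"
    using has_color_in_carrier[OF edge] has_color_in_carrier[OF has_color_sym[OF edge]]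
      has_color_sym[OF edge]
    by (simp_all add: has_color_Id1_iff)
  have distinct: "distinct [x0, x1, w At_b At_b, w At_b At_c, w At_c At_b, w At_c At_c,
      w At_a At_b, w At_a At_c, w At_b At_a, w At_c At_a]"
    by (rule distinct_if_color_profiles_distinct[where x = x0 and z = x1 and pqs =
          "[(Id1, At_a), (At_a, Id1), (At_b, At_b), (At_b, At_c), (At_c, At_b), (At_c, At_c),
            (At_a, At_b), (At_a, At_c), (At_b, At_a), (At_c, At_a)]"])
      (simp_all add: w edge ends)
  have a_edge: "has_color \<rho> (w p q) (w p' q') At_a"
    if "p \<noteq> Id1" "q \<noteq> Id1" "p' \<noteq> Id1" "q' \<noteq> Id1" and "(p, q) \<noteq> (p', q')"
      and "p \<in> {At_b, At_c} \<and> p' \<in> {At_b, At_c} \<or> q \<in> {At_b, At_c} \<and> q' \<in> {At_b, At_c}"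
    for p q p' q'
    using w[OF that(1,2)] w[OF that(3,4)]
    by (elim conjE) (rule has_color_At_a_if_profiles_differ[OF _ _ _ _ that(5,6)])
  show ?thesis
    by (rule exI[of _ w], rule exI[of _ "w At_a"], rule exI[of _ "\<lambda>p. w p At_a"])
      (intro conjI ballI impI;
        (fact distinct | auto intro: w[THEN conjunct1] w[THEN conjunct2] a_edge))
qed

end
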